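(* Let $n\ge1$, $K\ge1$ and $p_n\in[0,1]$. Let $(\mathcal{G}(n),\mathcal{A}_1(n),\dots,\mathcal{A}_K(n))$ be the output of the Tetris exploration algorithm, and let $\mathcal{N}_i(n)=\{v:h_v(n)=i\}$ be the sets of vertices at height $i$ in the final state of the Tetris model on $G(n,p_n)$ (both described in the context). Then the joint distribution of $(\mathcal{G}(n),\mathcal{A}_1(n),\dots,\mathcal{A}_K(n))$ is identical to that of $(G(n,p_n),\mathcal{N}_1(n),\dots,\mathcal{N}_K(n))$.
   Context: $G(n,p_n)$ is the Erdős–Rényi random graph on $[n]$ with independent edge probability $p_n$. Tetris model: given a realization of $G(n,p_n)$, set $h_v(0)=0$ for all $v$. At step $t+1$ a vertex $u$ is chosen uniformly at random among vertices not selected before; letting $m=\max\{h_w(t):w \text{ a neighbour of } u\}$ (with $m=0$ if $u$ has no neighbours), set $h_u(t+1)=m+1$ if $m<K$ and $h_u(t+1)=0$ otherwise; all other heights are unchanged. Tetris exploration algorithm: maintain $\mathcal{A}_k(t)$ (explored vertices at height $k$, $0\le k\le K$; height 0 meaning frozen) and unexplored set $\mathcal{U}(t)$, initially $\mathcal{A}_k(0)=\varnothing$, $\mathcal{U}(0)=[n]$; $\mathcal{A}(t)=\bigcup_{k=0}^K\mathcal{A}_k(t)$. At step $t+1$, select $v\in\mathcal{U}(t)$ uniformly at random, remove it from $\mathcal{U}$, and join it to each vertex of $\mathcal{A}(t)$ independently with probability $p_n$. Let $j$ be the maximal height among the vertices of $\mathcal{A}(t)$ joined to $v$ ($j=0$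 if none). If $j\le K-1$, $v$ receives height $j+1$ (joins $\mathcal{A}_{j+1}$); otherwise $v$ receives height $0$ (joins $\mathcal{A}_0$). After $n$ steps the algorithm outputs $(\mathcal{A}_1(n),\dots,\mathcal{A}_K(n))$ and the graph $\mathcal{G}(n)$ on $[n]$ of all edges added. *)

theory Defs
  imports "HOL-Probability.Probability"
begin

text \<open>Vertex set [n] = {1..n}; a graph is a set of edges, each edge a 2-element subset of [n].\<close>

definition pairs :: "nat \<Rightarrow> nat set set" where
  "pairs n = {e. e \<subseteq> {1..n} \<and> card e = 2}"

definition gnp :: "nat \<Rightarrow> real \<Rightarrow> nat set set pmf" where
  "gnp n p = map_pmf (\<lambda>f. {e \<in> pairs n. f e}) (Pi_pmf (pairs n) False (\<lambda>_. bernoulli_pmf p))"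

text \<open>Tetris model. State: (set of not-yet-selected vertices, heights).\<close>
definition tetris_step :: "nat \<Rightarrow> nat \<Rightarrow> nat set set \<Rightarrow> nat set \<times> (nat \<Rightarrow> nat)
    \<Rightarrow> (nat set \<times> (nat \<Rightarrow> nat)) pmf" where
  "tetris_step n K G s = (case s of (U, h) \<Rightarrow>
     bind_pmf (pmf_of_set U) (\<lambda>u.
       let m = Max (insert 0 (h ` {w \<in> {1..n}. {u, w} \<in> G})) in
       return_pmf (U - {u}, h(u := (if m < K then m + 1 else 0)))))"

definition tetris_run :: "nat \<Rightarrow> nat \<Rightarrow> nat set set \<Rightarrow> (nat set \<times> (nat \<Rightarrow> nat)) pmf" where
  "tetris_run n K G =
     ((\<lambda>S. bind_pmf S (tetris_step n K G)) ^^ n) (return_pmf ({1..n}, \<lambda>_. 0))"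

definition tetris_model :: "nat \<Rightarrow> nat \<Rightarrow> real \<Rightarrow> (nat set set \<times> nat set list) pmf" where
  "tetris_model n K p =
     bind_pmf (gnp n p) (\<lambda>G.
       map_pmf (\<lambda>(U, h). (G, map (\<lambda>i. {v \<in> {1..n}. h v = i}) [1..<K+1])) (tetris_run n K G))"

text \<open>State: (unexplored set U, edges added so far, heights of
  explored vertices); the explored vertices at height k are A_k = {w in [n] - U. h w = k}
  (height 0 = frozen), and A = [n] - U.\<close>
definition explore_step :: "nat \<Rightarrow> nat \<Rightarrow> real \<Rightarrow> nat set \<times> nat set set \<times> (nat \<Rightarrow> nat)
    \<Rightarrow> (nat set \<times> nat set set \<times> (nat \<Rightarrow> nat)) pmf" where
  "explore_step n K p s = (case s of (U, E, h) \<Rightarrow>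
     bind_pmf (pmf_of_set U) (\<lambda>v.
       bind_pmf (Pi_pmf ({1..n} - U) False (\<lambda>_. bernoulli_pmf p)) (\<lambda>J.
         let joined = {w \<in> {1..n} - U. J w};
             j = Max (insert 0 (h ` joined)) in
         return_pmf (U - {v}, E \<union> {{v, w} | w. w \<in> joined},
                     h(v := (if j \<le> K - 1 then j + 1 else 0))))))"

definition explore_run :: "nat \<Rightarrow> nat \<Rightarrow> real \<Rightarrow> (nat set \<times> nat set set \<times> (nat \<Rightarrow> nat)) pmf" where
  "explore_run n K p =
     ((\<lambda>S. bind_pmf S (explore_step n K p)) ^^ n) (return_pmf ({1..n}, {}, \<lambda>_. 0))"

definition tetris_exploration :: "nat \<Rightarrow> nat \<Rightarrow> real \<Rightarrow> (nat set set \<times> nat set list) pmf" where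
  "tetris_exploration n K p =
     map_pmf (\<lambda>(U, E, h). (E, map (\<lambda>k. {w \<in> {1..n} - U. h w = k}) [1..<K+1])) (explore_run n K p)"

end

theory Submission
  imports Defs
begin

text \<open>After \<open>t\<close> steps, the joint law of \<open>G(n,p)\<close> and the Tetris state equals the law of the
  exploration state, with its revealed graph completed by an independent \<open>G(n,p)\<close>-sample of the
  pairs that still touch an unexplored vertex. One step preserves this: when \<open>u\<close> is selected,
  those pairs split into the pairs from \<open>u\<close> to explored vertices, which the exploration reveals,
  and pairs touching the remaining unexplored vertices. All other neighbours of \<open>u\<close> are
  unexplored, hence have height 0, so the Tetris height of \<open>u\<close> only depends on the revealed
  pairs. After \<open>n\<close> steps nothing is left unrevealed.\<close>

lemma funpow_bind_pmf_intertwine: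
  assumes "\<And>t s. t < N \<Longrightarrow> s \<in> set_pmf (((\<lambda>S. bind_pmf S b) ^^ t) x) \<Longrightarrow>
             bind_pmf (c s) a = bind_pmf (b s) c"
  shows "t \<le> N \<Longrightarrow> bind_pmf (((\<lambda>S. bind_pmf S b) ^^ t) x) c = ((\<lambda>S. bind_pmf S a) ^^ t) (bind_pmf x c)"
proof (induction t)
  case 0
  show ?case by simp
next
  case (Suc t)
  let ?X = "((\<lambda>S. bind_pmf S b) ^^ t) x"
  have "bind_pmf (((\<lambda>S. bind_pmf S b) ^^ Suc t) x) c = bind_pmf ?X (\<lambda>s. bind_pmf (b s) c)"
    by (simp add: bind_assoc_pmf)
  also have "\<dots> = bind_pmf ?X (\<lambda>s. bind_pmf (c s) a)"
    using Suc.prems by (intro bind_pmf_cong refl) (simp add: assms Suc_le_eq)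
  also have "\<dots> = bind_pmf (bind_pmf ?X c) a"
    by (simp add: bind_assoc_pmf)
  also have "\<dots> = ((\<lambda>S. bind_pmf S a) ^^ Suc t) (bind_pmf x c)"
    using Suc by simp
  finally show ?case .
qed

lemma funpow_bind_pmf_Pair:
  fixes k :: "'g \<Rightarrow> 's \<Rightarrow> 's pmf"
  shows "((\<lambda>S. bind_pmf S (\<lambda>(G, s). map_pmf (Pair G) (k G s))) ^^ t) (bind_pmf \<mu> (\<lambda>G. map_pmf (Pair G) (\<sigma> G)))
   = bind_pmf \<mu> (\<lambda>G. map_pmf (Pair G) (((\<lambda>S. bind_pmf S (k G)) ^^ t) (\<sigma> G)))"
proof (induction t)
  case (Suc t)
  show ?case
    unfolding funpow.simps(2) o_apply Suc.IH
    by (simp add: map_pmf_def bind_assoc_pmf bind_return_pmf)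
qed simp

definition random_subset :: "real \<Rightarrow> 'a set \<Rightarrow> 'a set pmf" where
  "random_subset p P = map_pmf (\<lambda>f. {e \<in> P. f e}) (Pi_pmf P False (\<lambda>_. bernoulli_pmf p))"

lemma set_pmf_random_subset: "F \<in> set_pmf (random_subset p P) \<Longrightarrow> F \<subseteq> P"
  unfolding random_subset_def by auto

lemma random_subset_empty: "random_subset p {} = return_pmf {}"
  unfolding random_subset_def by simp

lemma random_subset_Un:
  assumes "finite P" "finite Q" "P \<inter> Q = {}"
  shows "random_subset p (P \<union> Q) =
    map_pmf (\<lambda>(X, Y). X \<union> Y) (pair_pmf (random_subset p P) (random_subset p Q))"
proof -
  let ?B = "\<lambda>P. Pi_pmf P False (\<lambda>_. bernoulli_pmf p)"
  have "random_subset p (P \<union> Q) =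
      map_pmf (\<lambda>f. {e \<in> P \<union> Q. f e}) (map_pmf (\<lambda>(f, g) x. if x \<in> P then f x else g x) (pair_pmf (?B P) (?B Q)))"
    unfolding random_subset_def using assms by (simp add: Pi_pmf_union)
  also have "\<dots> = map_pmf (\<lambda>(X, Y). X \<union> Y)
      (map_pmf (map_prod (\<lambda>f. {e \<in> P. f e}) (\<lambda>f. {e \<in> Q. f e})) (pair_pmf (?B P) (?B Q)))"
    unfolding pmf.map_comp using assms(3) by (intro map_pmf_cong) auto
  also have "\<dots> = map_pmf (\<lambda>(X, Y). X \<union> Y) (pair_pmf (random_subset p P) (random_subset p Q))"
    unfolding random_subset_def map_pair[symmetric] by (simp add: map_prod_def)
  finally show ?thesis .
qed

lemma random_subset_image:
  assumes "finite A" "inj f"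
  shows "random_subset p (f ` A) = map_pmf (\<lambda>J. f ` {x \<in> A. J x}) (Pi_pmf A False (\<lambda>_. bernoulli_pmf p))"
proof -
  have "Pi_pmf A False (\<lambda>_. bernoulli_pmf p) = map_pmf (\<lambda>g. g \<circ> f) (Pi_pmf (f ` A) False (\<lambda>_. bernoulli_pmf p))"
    using assms by (intro Pi_pmf_bij_betw) (auto simp: bij_betw_def inj_on_def inj_def)
  then show ?thesis
    unfolding random_subset_def using assms(2) by (simp add: pmf.map_comp comp_def inj_def) (auto intro!: map_pmf_cong)
qed

lemma inj_doubleton: "inj (\<lambda>w. {u, w})"
  by (auto simp: inj_def doubleton_eq_iff)

definition unexplored_pairs :: "nat \<Rightarrow> nat set \<Rightarrow> nat set set" where
  "unexplored_pairs n U = {e \<in> pairs n. e \<inter> U \<noteq> {}}"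

lemma finite_pairs: "finite (pairs n)"
  unfolding pairs_def by (rule finite_subset[of _ "Pow {1..n}"]) auto

lemma finite_unexplored_pairs: "finite (unexplored_pairs n U)"
  unfolding unexplored_pairs_def using finite_pairs by simp

lemma unexplored_pairs_all: "unexplored_pairs n {1..n} = pairs n"
  unfolding unexplored_pairs_def pairs_def by (auto simp: card_2_iff)

lemma unexplored_pairs_empty: "unexplored_pairs n {} = {}"
  unfolding unexplored_pairs_def by simp

lemma unexplored_pairs_remove:
  assumes "U \<subseteq> {1..n}" "u \<in> U"
  shows "unexplored_pairs n U = (\<lambda>w. {u, w}) ` ({1..n} - U) \<union> unexplored_pairs n (U - {u})"
    and "(\<lambda>w. {u, w}) ` ({1..n} - U) \<inter> unexplored_pairs n (U - {u}) = {}"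
proof -
  show "(\<lambda>w. {u, w}) ` ({1..n} - U) \<inter> unexplored_pairs n (U - {u}) = {}"
    unfolding unexplored_pairs_def by auto
  have "{u, w} \<in> pairs n" if "w \<in> {1..n} - U" for w
    using that assms by (auto simp: pairs_def card_2_iff)
  moreover have "e \<in> (\<lambda>w. {u, w}) ` ({1..n} - U)"
    if "e \<in> pairs n" "u \<in> e" "e \<inter> (U - {u}) = {}" for e
  proof -
    obtain a b where "e = {a, b}" "a \<noteq> b"
      using \<open>e \<in> pairs n\<close> by (auto simp: pairs_def card_2_iff)
    with that show ?thesis
      unfolding pairs_def by (auto simp: insert_commute)
  qed
  ultimately show "unexplored_pairs n U = (\<lambda>w. {u, w}) ` ({1..n} - U) \<union> unexplored_pairs n (U - {u})"
    unfolding unexplored_pairs_def using assms(2) by blast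
qed

lemma random_subset_unexplored_pairs:
  assumes "U \<subseteq> {1..n}" "u \<in> U"
  shows "random_subset p (unexplored_pairs n U) =
    bind_pmf (Pi_pmf ({1..n} - U) False (\<lambda>_. bernoulli_pmf p)) (\<lambda>J.
      map_pmf (\<lambda>F. (\<lambda>w. {u, w}) ` {w \<in> {1..n} - U. J w} \<union> F) (random_subset p (unexplored_pairs n (U - {u}))))"
proof -
  let ?A = "{1..n} - U"
  have split: "random_subset p (unexplored_pairs n U) =
      map_pmf (\<lambda>(X, Y). X \<union> Y)
        (pair_pmf (random_subset p ((\<lambda>w. {u, w}) ` ?A)) (random_subset p (unexplored_pairs n (U - {u}))))"
    unfolding unexplored_pairs_remove(1)[OF assms]
    by (rule random_subset_Un) (use finite_unexplored_pairs unexplored_pairs_remove(2)[OF assms] in auto)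
  have edges: "random_subset p ((\<lambda>w. {u, w}) ` ?A) =
      map_pmf (\<lambda>J. (\<lambda>w. {u, w}) ` {w \<in> ?A. J w}) (Pi_pmf ?A False (\<lambda>_. bernoulli_pmf p))"
    by (rule random_subset_image) (simp_all add: inj_doubleton)
  show ?thesis
    unfolding split edges by (simp add: pair_pmf_def map_pmf_def bind_assoc_pmf bind_return_pmf)
qed

definition explore_invariant :: "nat \<Rightarrow> nat \<Rightarrow> nat set \<times> nat set set \<times> (nat \<Rightarrow> nat) \<Rightarrow> bool" where
  "explore_invariant n t = (\<lambda>(U, E, h). U \<subseteq> {1..n} \<and> card U = n - t \<and>
     E \<subseteq> Pow ({1..n} - U) \<and> (\<forall>w. w \<notin> {1..n} - U \<longrightarrow> h w = 0))"

lemma explore_invariant_step: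
  assumes inv: "explore_invariant n t (U, E, h)" and "t < n"
    and s': "s' \<in> set_pmf (explore_step n K p (U, E, h))"
  shows "explore_invariant n (Suc t) s'"
proof -
  have U: "U \<subseteq> {1..n}" "card U = n - t" and E: "E \<subseteq> Pow ({1..n} - U)"
    and h: "\<forall>w. w \<notin> {1..n} - U \<longrightarrow> h w = 0"
    using inv unfolding explore_invariant_def by auto
  have "finite U" "U \<noteq> {}"
    using U \<open>t < n\<close> finite_subset by fastforce+
  with s' obtain v J j where v: "v \<in> U" and
    s'_eq: "s' = (U - {v}, E \<union> {{v, w} | w. w \<in> {w \<in> {1..n} - U. J w}}, h(v := j))"
    unfolding explore_step_def by (auto simp: Let_def)
  have explored: "{1..n} - (U - {v}) = insert v ({1..n} - U)"
    using v U(1) by auto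
  have "card (U - {v}) = n - Suc t"
    using U(2) v \<open>finite U\<close> by simp
  then show ?thesis
    unfolding s'_eq explore_invariant_def explored using U(1) E h v by auto
qed

lemma explore_invariant_reachable:
  "t \<le> n \<Longrightarrow> s \<in> set_pmf (((\<lambda>S. bind_pmf S (explore_step n K p)) ^^ t) (return_pmf ({1..n}, {}, \<lambda>_. 0)))
   \<Longrightarrow> explore_invariant n t s"
proof (induction t arbitrary: s)
  case 0
  then show ?case by (simp add: explore_invariant_def)
next
  case (Suc t)
  from Suc.prems(2) obtain U E h where
    reach: "(U, E, h) \<in> set_pmf (((\<lambda>S. bind_pmf S (explore_step n K p)) ^^ t) (return_pmf ({1..n}, {}, \<lambda>_. 0)))"
    and step: "s \<in> set_pmf (explore_step n K p (U, E, h))"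
    by auto
  have "explore_invariant n t (U, E, h)"
    using Suc.IH Suc.prems(1) reach by simp
  with step Suc.prems(1) show ?case
    by (intro explore_invariant_step) auto
qed

lemma max_neighbour_height:
  assumes inv: "explore_invariant n t (U, E, h)" and u: "u \<in> U"
    and J: "J \<subseteq> {1..n} - U" and F: "F \<subseteq> unexplored_pairs n (U - {u})"
  shows "Max (insert 0 (h ` {w \<in> {1..n}. {u, w} \<in> E \<union> ((\<lambda>w. {u, w}) ` J \<union> F)})) = Max (insert 0 (h ` J))"
proof -
  have E: "E \<subseteq> Pow ({1..n} - U)" and h: "\<forall>w. w \<notin> {1..n} - U \<longrightarrow> h w = 0"
    using inv unfolding explore_invariant_def by auto
  have "h w \<in> insert 0 (h ` J)" if "{u, w} \<in> E \<union> ((\<lambda>w. {u, w}) ` J \<union> F)" for w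
  proof (cases "w \<in> {1..n} - U")
    case True
    then have "{u, w} \<notin> E" "{u, w} \<notin> F"
      using E F u unfolding unexplored_pairs_def by auto
    with that have "w \<in> J"
      using inj_doubleton[of u] by (auto dest: injD)
    then show ?thesis by simp
  qed (use h in simp)
  then have "insert 0 (h ` {w \<in> {1..n}. {u, w} \<in> E \<union> ((\<lambda>w. {u, w}) ` J \<union> F)}) = insert 0 (h ` J)"
    using J by auto
  then show ?thesis by simp
qed

definition reveal_unexplored ::
    "nat \<Rightarrow> real \<Rightarrow> nat set \<times> nat set set \<times> (nat \<Rightarrow> nat) \<Rightarrow> (nat set set \<times> nat set \<times> (nat \<Rightarrow> nat)) pmf" where
  "reveal_unexplored n p = (\<lambda>(U, E, h). map_pmf (\<lambda>F. (E \<union> F, U, h)) (random_subset p (unexplored_pairs n U)))"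

lemma reveal_unexplored_explore_step:
  assumes "K \<ge> 1" and inv: "explore_invariant n t (U, E, h)" and "t < n"
  shows "bind_pmf (reveal_unexplored n p (U, E, h)) (\<lambda>(G, s). map_pmf (Pair G) (tetris_step n K G s))
       = bind_pmf (explore_step n K p (U, E, h)) (reveal_unexplored n p)"
proof -
  let ?A = "{1..n} - U"
  let ?B = "Pi_pmf ?A False (\<lambda>_. bernoulli_pmf p)"
  let ?R = "\<lambda>u. random_subset p (unexplored_pairs n (U - {u}))"
  let ?edges = "\<lambda>u J. (\<lambda>w. {u, w}) ` {w \<in> ?A. J w}"
  define level :: "nat \<Rightarrow> nat" where "level m = (if m < K then m + 1 else 0)" for m
  define height where "height G u = level (Max (insert 0 (h ` {w \<in> {1..n}. {u, w} \<in> G})))" for G u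
  have U: "U \<subseteq> {1..n}" "finite U" "U \<noteq> {}"
    using inv \<open>t < n\<close> finite_subset unfolding explore_invariant_def by fastforce+
  have "bind_pmf (reveal_unexplored n p (U, E, h)) (\<lambda>(G, s). map_pmf (Pair G) (tetris_step n K G s))
      = bind_pmf (random_subset p (unexplored_pairs n U)) (\<lambda>F.
          bind_pmf (pmf_of_set U) (\<lambda>u. return_pmf (E \<union> F, U - {u}, h(u := height (E \<union> F) u))))"
    unfolding reveal_unexplored_def tetris_step_def height_def level_def
    by (simp only: Let_def prod.case map_pmf_def bind_assoc_pmf bind_return_pmf)
  also have "\<dots> = bind_pmf (pmf_of_set U) (\<lambda>u. bind_pmf (random_subset p (unexplored_pairs n U)) (\<lambda>F.
          return_pmf (E \<union> F, U - {u}, h(u := height (E \<union> F) u))))"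
    by (rule bind_commute_pmf)
  also have "\<dots> = bind_pmf (pmf_of_set U) (\<lambda>u. bind_pmf ?B (\<lambda>J. bind_pmf (?R u) (\<lambda>F.
          return_pmf (E \<union> (?edges u J \<union> F), U - {u}, h(u := height (E \<union> (?edges u J \<union> F)) u)))))"
    using U by (intro bind_pmf_cong refl)
      (simp add: random_subset_unexplored_pairs map_pmf_def bind_assoc_pmf bind_return_pmf)
  also have "\<dots> = bind_pmf (pmf_of_set U) (\<lambda>u. bind_pmf ?B (\<lambda>J. bind_pmf (?R u) (\<lambda>F.
          return_pmf (E \<union> ?edges u J \<union> F, U - {u}, h(u := level (Max (insert 0 (h ` {w \<in> ?A. J w}))))))))"
  proof (intro bind_pmf_cong refl)
    fix u J F
    assume "u \<in> set_pmf (pmf_of_set U)" "J \<in> set_pmf ?B" "F \<in> set_pmf (?R u)"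
    then have "u \<in> U" "F \<subseteq> unexplored_pairs n (U - {u})"
      using U by (auto dest: set_pmf_random_subset)
    then have "height (E \<union> (?edges u J \<union> F)) u = level (Max (insert 0 (h ` {w \<in> ?A. J w})))"
      unfolding height_def by (subst max_neighbour_height[OF inv]) auto
    then show "return_pmf (E \<union> (?edges u J \<union> F), U - {u}, h(u := height (E \<union> (?edges u J \<union> F)) u)) =
        return_pmf (E \<union> ?edges u J \<union> F, U - {u}, h(u := level (Max (insert 0 (h ` {w \<in> ?A. J w})))))"
      by (simp add: Un_assoc)
  qed
  also have "\<dots> = bind_pmf (explore_step n K p (U, E, h)) (reveal_unexplored n p)"
  proof -
    have "j \<le> K - 1 \<longleftrightarrow> j < K" for j :: nat
      using \<open>K \<ge> 1\<close> by arith
    then show ?thesis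
      unfolding explore_step_def reveal_unexplored_def level_def
      by (simp only: Let_def prod.case setcompr_eq_image Collect_mem_eq map_pmf_def bind_assoc_pmf bind_return_pmf)
  qed
  finally show ?thesis .
qed

lemma reveal_unexplored_initial:
  "reveal_unexplored n p ({1..n}, {}, \<lambda>_. 0) = map_pmf (\<lambda>G. (G, {1..n}, \<lambda>_. 0)) (gnp n p)"
  unfolding reveal_unexplored_def prod.case unexplored_pairs_all gnp_def random_subset_def
  by (simp add: pmf.map_comp comp_def)

lemma explore_invariant_final: "explore_invariant n n (U, E, h) \<Longrightarrow> U = {}"
  using finite_subset[of U "{1..n}"] unfolding explore_invariant_def by auto

lemma reveal_unexplored_empty: "reveal_unexplored n p ({}, E, h) = return_pmf (E, {}, h)"
  unfolding reveal_unexplored_def by (simp add: unexplored_pairs_empty random_subset_empty)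

lemma explore_run_final: "s \<in> set_pmf (explore_run n K p) \<Longrightarrow> \<exists>E h. s = ({}, E, h)"
  using explore_invariant_reachable[of n n] explore_invariant_final unfolding explore_run_def
  by (cases s) fastforce

lemma gnp_tetris_run_eq_explore_run:
  assumes "K \<ge> 1"
  shows "bind_pmf (gnp n p) (\<lambda>G. map_pmf (Pair G) (tetris_run n K G)) =
    map_pmf (\<lambda>(U, E, h). (E, U, h)) (explore_run n K p)"
proof -
  let ?tetris = "\<lambda>(G, s). map_pmf (Pair G) (tetris_step n K G s)"
  let ?x0 = "({1..n}, {}, \<lambda>_. 0) :: nat set \<times> nat set set \<times> (nat \<Rightarrow> nat)"
  have "bind_pmf (gnp n p) (\<lambda>G. map_pmf (Pair G) (tetris_run n K G)) =
      ((\<lambda>S. bind_pmf S ?tetris) ^^ n) (reveal_unexplored n p ?x0)"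
    unfolding tetris_run_def reveal_unexplored_initial funpow_bind_pmf_Pair[symmetric]
    by (simp add: map_pmf_def bind_assoc_pmf bind_return_pmf)
  also have "\<dots> = bind_pmf (explore_run n K p) (reveal_unexplored n p)"
    unfolding explore_run_def bind_return_pmf[of ?x0 "reveal_unexplored n p", symmetric]
  proof (rule funpow_bind_pmf_intertwine[symmetric])
    fix t s
    assume "t < n" "s \<in> set_pmf (((\<lambda>S. bind_pmf S (explore_step n K p)) ^^ t) (return_pmf ?x0))"
    then have "explore_invariant n t s"
      by (intro explore_invariant_reachable) auto
    with \<open>t < n\<close> show "bind_pmf (reveal_unexplored n p s) ?tetris = bind_pmf (explore_step n K p s) (reveal_unexplored n p)"
      by (cases s) (auto intro: reveal_unexplored_explore_step[OF \<open>K \<ge> 1\<close>])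
  qed simp
  also have "\<dots> = map_pmf (\<lambda>(U, E, h). (E, U, h)) (explore_run n K p)"
    unfolding map_pmf_def
    by (intro bind_pmf_cong refl) (auto dest: explore_run_final simp: reveal_unexplored_empty)
  finally show ?thesis .
qed

theorem proposition2:
  fixes n K :: nat and p :: real
  assumes "n \<ge> 1" and "K \<ge> 1" and "0 \<le> p" and "p \<le> 1"
  shows "tetris_exploration n K p = tetris_model n K p"
proof -
  have "tetris_model n K p = map_pmf (\<lambda>(G, U, h). (G, map (\<lambda>i. {v \<in> {1..n}. h v = i}) [1..<K+1]))
      (bind_pmf (gnp n p) (\<lambda>G. map_pmf (Pair G) (tetris_run n K G)))"
    unfolding tetris_model_def by (simp add: map_bind_pmf pmf.map_comp case_prod_unfold comp_def)
  also have "\<dots> = tetris_exploration n K p"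
    unfolding gnp_tetris_run_eq_explore_run[OF \<open>K \<ge> 1\<close>] tetris_exploration_def pmf.map_comp
    by (intro map_pmf_cong refl) (auto dest: explore_run_final)
  finally show ?thesis ..
qed

end
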